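(* Fix a ROMDP satisfying Assumptions 1 and 2 below, and a deterministic observation-based policy $\pi:\mathcal Y\to\mathcal A$. For every action $l\in\mathcal A$ and every hidden state $i\in\mathcal X_\pi^{(l)}$ let $\mathcal Y_i^{(l)}=\{j\in[Y]:[V_2^{(l)}]_{j,i}>0\}$ be the observations clustered together according to $V_2^{(l)}$, and let $\mathcal Y^{\mathsf c}=\mathcal Y\setminus\bigcup_{i,l}\mathcal Y_i^{(l)}$ be the observations not clustered. Let the auxiliary state space $\mathcal S$ consist of all the clusters $\mathcal Y_i^{(l)}$ ($l\in\mathcal A$, $i\in\mathcal X_\pi^{(l)}$) together with the singletons $\{j\}$, $j\in\mathcal Y^{\mathsf c}$. Then the total number of elements of $\mathcal S$ satisfies $S=|\mathcal S|\le AX$.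
   Context: A rich-observation MDP (ROMDP) consists of finite sets of hidden states $\mathcal X=[X]$, observations $\mathcal Y=[Y]$ and actions $\mathcal A=[A]$ with $X\le Y$; a transition tensor $T\in\mathbb R^{X\times X\times A}$, $T_{i',i,l}=\mathbb P(x'=i'\mid x=i,a=l)$; an observation matrix $O\in\mathbb R^{Y\times X}$, $O_{j,i}=\mathbb P(y=j\mid x=i)$, such that every observation $j$ has exactly one hidden state $x_j$ with $O_{j,x_j}>0$ (so the sets $\mathcal Y_i=\{j:O_{j,i}>0\}$ partition $\mathcal Y$); rewards in $[0,1]$ whose mean depends only on hidden state and action. The agent only observes $y_t$ and rewards. Assumption 1: for every deterministic policy $\pi:\mathcal Y\to\mathcal A$ the Markov chain induced on hidden states is ergodic. Assumption 2: for every action $l$ the matrix $T_{\cdot,\cdot,l}\in\mathbb R^{X\times X}$ is full rank. For a policy $\pi$, let $\omega_\pi^{(l)}(i)=\mathbb P_\pi(x=i\mid a=l)$ under the stationary distribution and $\mathcal X_\pi^{(l)}=\{i:\omega_\pi^{(l)}(i)>0\}$. Consider three consecutive steps $t-1,t,t+1$ of the stationary process under $\pi$, relabelled $1,2,3$, and let $\vec v_1,\vec v_2,\vec v_3\in\{0,1\}^Y$ be the one-hot encodings of $y_{t-1},y_t,y_{t+1}$; $x_2,a_2$ denote the hidden state and action at time $t$. The factor matrix $V_2^{(l)}\in\mathbb R^{Y\times|\mathcal X_\pi^{(l)}|}$ is $[V_2^{(l)}]_{j,i}=\mathbb P(\vec v_2=e_j\mid x_2=i,a_2=l)$ for $i\in\mathcal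 X_\pi^{(l)}$. *)

theory Defs
  imports Complex_Main "Jordan_Normal_Form.DL_Rank"
begin

text \<open>Indices: hidden states 0..<X, observations 0..<Y, actions 0..<A.
  T i' i l = P(x' = i' | x = i, a = l);  Ob j i = P(y = j | x = i).\<close>

definition romdp ::
  "nat \<Rightarrow> nat \<Rightarrow> nat \<Rightarrow> (nat \<Rightarrow> nat \<Rightarrow> nat \<Rightarrow> real) \<Rightarrow> (nat \<Rightarrow> nat \<Rightarrow> real)
    \<Rightarrow> (nat \<Rightarrow> nat \<Rightarrow> real) \<Rightarrow> bool" where
  "romdp X Y A T Ob R \<longleftrightarrow>
     0 < X \<and> X \<le> Y \<and> 0 < A \<and>
     (\<forall>i'<X. \<forall>i<X. \<forall>l<A. 0 \<le> T i' i l) \<and>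
     (\<forall>i<X. \<forall>l<A. (\<Sum>i'<X. T i' i l) = 1) \<and>
     (\<forall>j<Y. \<forall>i<X. 0 \<le> Ob j i) \<and>
     (\<forall>i<X. (\<Sum>j<Y. Ob j i) = 1) \<and>
     (\<forall>j<Y. \<exists>!i. i < X \<and> 0 < Ob j i) \<and>
     (\<forall>i<X. \<forall>l<A. 0 \<le> R i l \<and> R i l \<le> 1)"

definition policy :: "nat \<Rightarrow> nat \<Rightarrow> (nat \<Rightarrow> nat) \<Rightarrow> bool" where
  "policy Y A \<pi> \<longleftrightarrow> (\<forall>j<Y. \<pi> j < A)"

definition induced_kernel ::
  "nat \<Rightarrow> (nat \<Rightarrow> nat \<Rightarrow> nat \<Rightarrow> real) \<Rightarrow> (nat \<Rightarrow> nat \<Rightarrow> real) \<Rightarrow> (nat \<Rightarrow> nat)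
    \<Rightarrow> nat \<Rightarrow> nat \<Rightarrow> real" where
  "induced_kernel Y T Ob \<pi> i' i = (\<Sum>j<Y. Ob j i * T i' i (\<pi> j))"

fun nstep :: "nat \<Rightarrow> (nat \<Rightarrow> nat \<Rightarrow> real) \<Rightarrow> nat \<Rightarrow> nat \<Rightarrow> nat \<Rightarrow> real" where
  "nstep X P 0 i' i = (if i' = i then 1 else 0)"
| "nstep X P (Suc n) i' i = (\<Sum>k<X. P i' k * nstep X P n k i)"

definition ergodic :: "nat \<Rightarrow> (nat \<Rightarrow> nat \<Rightarrow> real) \<Rightarrow> bool" where
  "ergodic X P \<longleftrightarrow>
     (\<forall>i<X. \<forall>i'<X. \<exists>n. 0 < nstep X P n i' i) \<and>
     (\<forall>i<X. Gcd {n. 0 < n \<and> 0 < nstep X P n i i} = 1)"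

definition assumption1 ::
  "nat \<Rightarrow> nat \<Rightarrow> nat \<Rightarrow> (nat \<Rightarrow> nat \<Rightarrow> nat \<Rightarrow> real) \<Rightarrow> (nat \<Rightarrow> nat \<Rightarrow> real) \<Rightarrow> bool" where
  "assumption1 X Y A T Ob \<longleftrightarrow>
     (\<forall>\<pi>. policy Y A \<pi> \<longrightarrow> ergodic X (induced_kernel Y T Ob \<pi>))"

definition assumption2 :: "nat \<Rightarrow> nat \<Rightarrow> (nat \<Rightarrow> nat \<Rightarrow> nat \<Rightarrow> real) \<Rightarrow> bool" where
  "assumption2 X A T \<longleftrightarrow>
     (\<forall>l<A. vec_space.rank X (mat X X (\<lambda>(i', i). T i' i l) :: real mat) = X)"

definition stationary :: "nat \<Rightarrow> (nat \<Rightarrow> nat \<Rightarrow> real) \<Rightarrow> (nat \<Rightarrow> real) \<Rightarrow> bool" where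
  "stationary X P \<rho> \<longleftrightarrow>
     (\<forall>i<X. 0 \<le> \<rho> i) \<and> (\<Sum>i<X. \<rho> i) = 1 \<and>
     (\<forall>i'<X. \<rho> i' = (\<Sum>i<X. P i' i * \<rho> i))"

text \<open>Joint stationary probability P(x = i, a = l) under policy pi.\<close>
definition joint_xa ::
  "nat \<Rightarrow> (nat \<Rightarrow> nat \<Rightarrow> real) \<Rightarrow> (nat \<Rightarrow> nat) \<Rightarrow> (nat \<Rightarrow> real) \<Rightarrow> nat \<Rightarrow> nat \<Rightarrow> real" where
  "joint_xa Y Ob \<pi> \<rho> i l = \<rho> i * (\<Sum>j\<in>{j. j < Y \<and> \<pi> j = l}. Ob j i)"

definition omega ::
  "nat \<Rightarrow> nat \<Rightarrow> (nat \<Rightarrow> nat \<Rightarrow> real) \<Rightarrow> (nat \<Rightarrow> nat) \<Rightarrow> (nat \<Rightarrow> real) \<Rightarrow> nat \<Rightarrow> nat \<Rightarrow> real" where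
  "omega X Y Ob \<pi> \<rho> l i = joint_xa Y Ob \<pi> \<rho> i l / (\<Sum>k<X. joint_xa Y Ob \<pi> \<rho> k l)"

definition Xsupp ::
  "nat \<Rightarrow> nat \<Rightarrow> (nat \<Rightarrow> nat \<Rightarrow> real) \<Rightarrow> (nat \<Rightarrow> nat) \<Rightarrow> (nat \<Rightarrow> real) \<Rightarrow> nat \<Rightarrow> nat set" where
  "Xsupp X Y Ob \<pi> \<rho> l = {i. i < X \<and> 0 < omega X Y Ob \<pi> \<rho> l i}"

text \<open>[V_2^(l)]_{j,i} = P(y_2 = j | x_2 = i, a_2 = l), where a_2 = pi(y_2).\<close>
definition V2 ::
  "nat \<Rightarrow> (nat \<Rightarrow> nat \<Rightarrow> real) \<Rightarrow> (nat \<Rightarrow> nat) \<Rightarrow> nat \<Rightarrow> nat \<Rightarrow> nat \<Rightarrow> real" where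
  "V2 Y Ob \<pi> l j i =
     (if \<pi> j = l then Ob j i else 0) / (\<Sum>j'\<in>{j'. j' < Y \<and> \<pi> j' = l}. Ob j' i)"

definition cluster ::
  "nat \<Rightarrow> (nat \<Rightarrow> nat \<Rightarrow> real) \<Rightarrow> (nat \<Rightarrow> nat) \<Rightarrow> nat \<Rightarrow> nat \<Rightarrow> nat set" where
  "cluster Y Ob \<pi> l i = {j. j < Y \<and> 0 < V2 Y Ob \<pi> l j i}"

definition unclustered ::
  "nat \<Rightarrow> nat \<Rightarrow> nat \<Rightarrow> (nat \<Rightarrow> nat \<Rightarrow> real) \<Rightarrow> (nat \<Rightarrow> nat) \<Rightarrow> (nat \<Rightarrow> real) \<Rightarrow> nat set" where
  "unclustered X Y A Ob \<pi> \<rho> =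
     {j. j < Y} - (\<Union>l\<in>{..<A}. \<Union>i\<in>Xsupp X Y Ob \<pi> \<rho> l. cluster Y Ob \<pi> l i)"

definition aux_states ::
  "nat \<Rightarrow> nat \<Rightarrow> nat \<Rightarrow> (nat \<Rightarrow> nat \<Rightarrow> real) \<Rightarrow> (nat \<Rightarrow> nat) \<Rightarrow> (nat \<Rightarrow> real) \<Rightarrow> nat set set" where
  "aux_states X Y A Ob \<pi> \<rho> =
     {cluster Y Ob \<pi> l i | l i. l < A \<and> i \<in> Xsupp X Y Ob \<pi> \<rho> l}
     \<union> {{j} | j. j \<in> unclustered X Y A Ob \<pi> \<rho>}"

end

theory Submission
  imports Defs
begin

text \<open>Irreducibility of the induced chain forces the stationary distribution to charge every
  hidden state. Hence every observation j, emitted with positive probability by its hidden state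
  i, lies in the cluster of i for the action \<pi> j, so no observation is left unclustered and the
  auxiliary states are just the clusters, indexed by pairs (l, i) \<in> [A] \<times> [X].\<close>

lemma nstep_nonneg:
  assumes "\<And>a b. a < X \<Longrightarrow> b < X \<Longrightarrow> 0 \<le> P a b"
  shows "a < X \<Longrightarrow> b < X \<Longrightarrow> 0 \<le> nstep X P n a b"
proof (induction n arbitrary: a b)
  case 0
  then show ?case by simp
next
  case (Suc n)
  then show ?case using assms by (auto intro!: sum_nonneg)
qed

lemma stationary_nstep:
  assumes "stationary X P \<rho>" and "i' < X"
  shows "\<rho> i' = (\<Sum>i<X. nstep X P n i' i * \<rho> i)"
  using assms(2)
proof (induction n arbitrary: i')
  case 0
  have "(\<Sum>i<X. nstep X P 0 i' i * \<rho> i) = (\<Sum>i<X. if i' = i then \<rho> i else 0)"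
    by (intro sum.cong) auto
  with 0 show ?case by (simp add: sum.delta)
next
  case (Suc n)
  have "(\<Sum>i<X. nstep X P (Suc n) i' i * \<rho> i)
      = (\<Sum>i<X. \<Sum>k<X. P i' k * (nstep X P n k i * \<rho> i))"
    by (simp add: sum_distrib_right mult.assoc)
  also have "\<dots> = (\<Sum>k<X. P i' k * (\<Sum>i<X. nstep X P n k i * \<rho> i))"
    by (subst sum.swap) (simp add: sum_distrib_left)
  also have "\<dots> = (\<Sum>k<X. P i' k * \<rho> k)"
    by (intro sum.cong) (simp_all add: Suc.IH[symmetric])
  also have "\<dots> = \<rho> i'"
    using assms(1) Suc.prems unfolding stationary_def by metis
  finally show ?case by simp
qed

lemma stationary_pos_if_irreducible:
  assumes stat: "stationary X P \<rho>"
    and nonneg: "\<And>a b. a < X \<Longrightarrow> b < X \<Longrightarrow> 0 \<le> P a b"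
    and irred: "\<forall>i<X. \<forall>i'<X. \<exists>n. 0 < nstep X P n i' i"
    and i: "i < X"
  shows "0 < \<rho> i"
proof -
  have \<rho>_nonneg: "\<forall>i<X. 0 \<le> \<rho> i" and "(\<Sum>i<X. \<rho> i) = 1"
    using stat unfolding stationary_def by blast+
  then have "\<not> (\<forall>k\<in>{..<X}. \<rho> k \<le> 0)"
    using sum_nonpos[of "{..<X}" \<rho>] by auto
  then obtain k where k: "k < X" "0 < \<rho> k"
    by (auto simp: not_le)
  obtain n where n: "0 < nstep X P n i k"
    using irred k i by blast
  have "nstep X P n i k * \<rho> k \<le> (\<Sum>k'<X. nstep X P n i k' * \<rho> k')"
    using k i \<rho>_nonneg nstep_nonneg[OF nonneg]
    by (intro member_le_sum) (auto intro!: mult_nonneg_nonneg)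
  also have "\<dots> = \<rho> i"
    by (rule stationary_nstep[OF stat i, symmetric])
  finally show ?thesis
    using mult_pos_pos[OF n k(2)] by linarith
qed

lemma emission_in_cluster:
  assumes Ob_nonneg: "\<forall>j<Y. \<forall>i<X. 0 \<le> Ob j i"
    and \<rho>_pos: "\<forall>i<X. 0 < \<rho> i"
    and j: "j < Y" and i: "i < X" and emits: "0 < Ob j i"
  shows "i \<in> Xsupp X Y Ob \<pi> \<rho> (\<pi> j)" and "j \<in> cluster Y Ob \<pi> (\<pi> j) i"
proof -
  have action_mass: "0 < (\<Sum>j'\<in>{j'. j' < Y \<and> \<pi> j' = \<pi> j}. Ob j' i)"
    using j i emits Ob_nonneg
    by (intro sum_pos2[where i = j]) auto
  have joint_nonneg: "0 \<le> joint_xa Y Ob \<pi> \<rho> k (\<pi> j)" if "k < X" for k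
    unfolding joint_xa_def using that Ob_nonneg \<rho>_pos
    by (intro mult_nonneg_nonneg sum_nonneg) (auto simp: less_imp_le)
  have "0 < joint_xa Y Ob \<pi> \<rho> i (\<pi> j)"
    unfolding joint_xa_def using action_mass \<rho>_pos i by simp
  moreover have "joint_xa Y Ob \<pi> \<rho> i (\<pi> j) \<le> (\<Sum>k<X. joint_xa Y Ob \<pi> \<rho> k (\<pi> j))"
    using i joint_nonneg by (intro member_le_sum) auto
  ultimately have "0 < omega X Y Ob \<pi> \<rho> (\<pi> j) i"
    unfolding omega_def by (intro divide_pos_pos) auto
  then show "i \<in> Xsupp X Y Ob \<pi> \<rho> (\<pi> j)"
    unfolding Xsupp_def using i by blast
  show "j \<in> cluster Y Ob \<pi> (\<pi> j) i"
    unfolding cluster_def V2_def using j emits action_mass by simp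
qed

lemma unclustered_empty:
  assumes "romdp X Y A T Ob R" and "policy Y A \<pi>" and "\<forall>i<X. 0 < \<rho> i"
  shows "unclustered X Y A Ob \<pi> \<rho> = {}"
proof -
  have Ob_nonneg: "\<forall>j<Y. \<forall>i<X. 0 \<le> Ob j i"
    and emitter: "\<forall>j<Y. \<exists>!i. i < X \<and> 0 < Ob j i"
    using assms(1) by (simp_all add: romdp_def)
  have "j \<in> (\<Union>l\<in>{..<A}. \<Union>i\<in>Xsupp X Y Ob \<pi> \<rho> l. cluster Y Ob \<pi> l i)" if j: "j < Y" for j
  proof -
    obtain i where i: "i < X" "0 < Ob j i"
      using emitter j by blast
    have "\<pi> j < A"
      using assms(2) j unfolding policy_def by blast
    then show ?thesis
      using emission_in_cluster[OF Ob_nonneg assms(3) j i] by blast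
  qed
  then show ?thesis
    unfolding unclustered_def by blast
qed

lemma induced_kernel_nonneg:
  assumes "romdp X Y A T Ob R" and "policy Y A \<pi>" and "a < X" and "b < X"
  shows "0 \<le> induced_kernel Y T Ob \<pi> a b"
  using assms unfolding induced_kernel_def romdp_def policy_def
  by (auto intro!: sum_nonneg mult_nonneg_nonneg)

lemma card_clusters_le:
  "card {cluster Y Ob \<pi> l i | l i. l < A \<and> i \<in> Xsupp X Y Ob \<pi> \<rho> l} \<le> A * X"
proof -
  have "{cluster Y Ob \<pi> l i | l i. l < A \<and> i \<in> Xsupp X Y Ob \<pi> \<rho> l}
      \<subseteq> (\<lambda>(l, i). cluster Y Ob \<pi> l i) ` ({..<A} \<times> {..<X})"
    unfolding Xsupp_def by auto
  then have "card {cluster Y Ob \<pi> l i | l i. l < A \<and> i \<in> Xsupp X Y Ob \<pi> \<rho> l}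
      \<le> card ((\<lambda>(l, i). cluster Y Ob \<pi> l i) ` ({..<A} \<times> {..<X}))"
    by (intro card_mono) auto
  also have "\<dots> \<le> card ({..<A} \<times> {..<X})"
    by (rule card_image_le) simp
  finally show ?thesis
    by (simp add: card_cartesian_product)
qed

theorem lemma1:
  fixes X Y A :: nat
    and T :: "nat \<Rightarrow> nat \<Rightarrow> nat \<Rightarrow> real"
    and Ob :: "nat \<Rightarrow> nat \<Rightarrow> real"
    and R :: "nat \<Rightarrow> nat \<Rightarrow> real"
    and \<pi> :: "nat \<Rightarrow> nat"
    and \<rho> :: "nat \<Rightarrow> real"
  assumes "romdp X Y A T Ob R"
    and "assumption1 X Y A T Ob"
    and "assumption2 X A T"
    and "policy Y A \<pi>"
    and "stationary X (induced_kernel Y T Ob \<pi>) \<rho>"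
  shows "card (aux_states X Y A Ob \<pi> \<rho>) \<le> A * X"
proof -
  have "\<forall>i<X. \<forall>i'<X. \<exists>n. 0 < nstep X (induced_kernel Y T Ob \<pi>) n i' i"
    using assms(2,4) unfolding assumption1_def ergodic_def by blast
  then have "\<forall>i<X. 0 < \<rho> i"
    using stationary_pos_if_irreducible[OF assms(5) induced_kernel_nonneg[OF assms(1,4)]] by blast
  then have "unclustered X Y A Ob \<pi> \<rho> = {}"
    using unclustered_empty assms(1,4) by blast
  then show ?thesis
    unfolding aux_states_def using card_clusters_le by simp
qed

end
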